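(* For every $n\ge0$, the map $\preceq\mapsto M_\preceq$ is a bijection from the set of $\{\mathbf{3},\mathbf{2}+\mathbf{2}\}$-free naturally labelled posets on $[n]$ onto the set of upper-triangular $n\times n$ binary matrices $M$ that satisfy the following conditions. (i) $M(i,i)=1$ for all $i$. (ii) (no $M_0$) There are no $i<j<k$ with $M(i,j)=M(j,k)=1$. (iii) (no $M_1$) There are no $a<b<c<d$ with $M(a,b)=1$, $M(a,c)=0$, $M(a,d)=0$, $M(b,c)=0$, $M(b,d)=0$, $M(c,d)=1$. (iv) (no $M_2$) There are no $a<b<c<d$ with $M(a,b)=0$, $M(a,c)=1$, $M(a,d)=0$, $M(b,c)=0$, $M(b,d)=1$, $M(c,d)=0$. (v) (no $M_3$) There are no $a<b<c<d$ with $M(a,b)=0$, $M(a,c)=0$, $M(a,d)=1$, $M(b,c)=1$, $M(b,d)=0$, $M(c,d)=0$. In conditions (iii)–(v) the entry $M(a,a)$ is unrestricted. Conditions (ii)–(v) say that $M$ avoids the partial submatrices $M_0=\begin{pmatrix}1&\ast\\1&1\end{pmatrix}$ on rows $i<j$ and columns $j<k$, and $M_1=\begin{pmatrix}1&0&0\\1&0&0\\\ast&1&1\end{pmatrix}$, $M_2=\begin{pmatrix}0&1&0\\1&0&1\\\ast&1&0\end{pmatrix}$, $M_3=\begin{pmatrix}0&0&1\\1&1&0\\\ast&1&0\end{pmatrix}$ on rows $a<b<c$ and columns $b<c<d$, where $\ast$ marks an unconstrained entry. In each case the lower-left specified entries lie on the main diagonal.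
   Context: A partial order $\preceq$ on $[n]$ is naturally labelled if $x\prec y$ implies $x<y$. It is $\mathbf{3}$-free if there are no $x\prec y\prec z$. It is $(\mathbf{2}+\mathbf{2})$-free if there are no four distinct elements $i\prec j$, $k\prec \ell$ with each of $i,j$ incomparable to each of $k,\ell$. It is $\{\mathbf{3},\mathbf{2}+\mathbf{2}\}$-free if it is both. The incidence matrix $M_\preceq$ has $M_\preceq(i,j)=1$ if and only if $i\preceq j$. *)

theory Defs
  imports Main "Jordan_Normal_Form.Matrix"
begin

text \<open>A poset on [n] = {1..n} is a relation r with partial_order_on {1..n} r
  (reflexive on {1..n}, contained in {1..n} x {1..n}, transitive, antisymmetric).
  Pairs (x,y) in r mean x below-or-equal y.\<close>

definition naturally_labelled :: "nat rel \<Rightarrow> bool" where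
  "naturally_labelled r \<longleftrightarrow> (\<forall>x y. (x, y) \<in> r \<and> x \<noteq> y \<longrightarrow> x < y)"

definition strictly_below :: "nat rel \<Rightarrow> nat \<Rightarrow> nat \<Rightarrow> bool" where
  "strictly_below r x y \<longleftrightarrow> (x, y) \<in> r \<and> x \<noteq> y"

definition incomparable :: "nat rel \<Rightarrow> nat \<Rightarrow> nat \<Rightarrow> bool" where
  "incomparable r x y \<longleftrightarrow> (x, y) \<notin> r \<and> (y, x) \<notin> r"

definition three_free :: "nat rel \<Rightarrow> bool" where
  "three_free r \<longleftrightarrow> \<not> (\<exists>x y z. strictly_below r x y \<and> strictly_below r y z)"

definition two_plus_two_free :: "nat rel \<Rightarrow> bool" where
  "two_plus_two_free r \<longleftrightarrow> \<not> (\<exists>i j k l. distinct [i, j, k, l] \<and>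
      strictly_below r i j \<and> strictly_below r k l \<and>
      incomparable r i k \<and> incomparable r i l \<and>
      incomparable r j k \<and> incomparable r j l)"

definition nl_32_free_posets :: "nat \<Rightarrow> nat rel set" where
  "nl_32_free_posets n = {r. partial_order_on {1..n} r \<and> naturally_labelled r \<and>
      three_free r \<and> two_plus_two_free r}"

text \<open>Incidence matrix: entry (i,j) (0-based, i,j < n) corresponds to the
  elements i+1, j+1 of [n]; it is 1 iff i+1 is below-or-equal j+1.\<close>

definition incidence_matrix :: "nat \<Rightarrow> nat rel \<Rightarrow> nat mat" where
  "incidence_matrix n r = mat n n (\<lambda>(i, j). if (i + 1, j + 1) \<in> r then 1 else 0)"

definition good_matrices :: "nat \<Rightarrow> nat mat set" where
  "good_matrices n = {M. M \<in> carrier_mat n n \<and>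
      (\<forall>i<n. \<forall>j<n. M $$ (i, j) \<in> {0, 1}) \<and>
      upper_triangular M \<and>
      (\<forall>i<n. M $$ (i, i) = 1) \<and>
      \<not> (\<exists>i j k. i < j \<and> j < k \<and> k < n \<and> M $$ (i, j) = 1 \<and> M $$ (j, k) = 1) \<and>
      \<not> (\<exists>a b c d. a < b \<and> b < c \<and> c < d \<and> d < n \<and>
          M $$ (a, b) = 1 \<and> M $$ (a, c) = 0 \<and> M $$ (a, d) = 0 \<and>
          M $$ (b, c) = 0 \<and> M $$ (b, d) = 0 \<and> M $$ (c, d) = 1) \<and>
      \<not> (\<exists>a b c d. a < b \<and> b < c \<and> c < d \<and> d < n \<and>
          M $$ (a, b) = 0 \<and> M $$ (a, c) = 1 \<and> M $$ (a, d) = 0 \<and>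
          M $$ (b, c) = 0 \<and> M $$ (b, d) = 1 \<and> M $$ (c, d) = 0) \<and>
      \<not> (\<exists>a b c d. a < b \<and> b < c \<and> c < d \<and> d < n \<and>
          M $$ (a, b) = 0 \<and> M $$ (a, c) = 0 \<and> M $$ (a, d) = 1 \<and>
          M $$ (b, c) = 1 \<and> M $$ (b, d) = 0 \<and> M $$ (c, d) = 0)}"

end

theory Submission
  imports Defs
begin

text \<open>In a naturally labelled poset, x < y are incomparable exactly when (x, y) is not
  related, i.e. when the incidence matrix has a 0 at (x, y). A chain of length three is then
  an occurrence of M0, and once M0 is excluded transitivity holds vacuously. A 2+2 consists
  of two strict relations a \<prec> b and c \<prec> d, say with a < c, whose four cross entries vanish;
  the three possible interleavings a < b < c < d, a < c < b < d and a < c < d < b are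
  precisely the patterns M1, M2 and M3.\<close>

text \<open>The patterns M0, ..., M3 read on the relation, with the paper's 1-based indices: the
  entry M(i, j) becomes the membership of (i, j), and the starred diagonal entries are dropped.\<close>

definition contains_M0 :: "nat rel \<Rightarrow> bool" where
  "contains_M0 r \<longleftrightarrow> (\<exists>x y z. x < y \<and> y < z \<and> (x, y) \<in> r \<and> (y, z) \<in> r)"

definition contains_M1 :: "nat rel \<Rightarrow> bool" where
  "contains_M1 r \<longleftrightarrow> (\<exists>a b c d. a < b \<and> b < c \<and> c < d \<and>
     (a, b) \<in> r \<and> (a, c) \<notin> r \<and> (a, d) \<notin> r \<and> (b, c) \<notin> r \<and> (b, d) \<notin> r \<and> (c, d) \<in> r)"

definition contains_M2 :: "nat rel \<Rightarrow> bool" where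
  "contains_M2 r \<longleftrightarrow> (\<exists>a b c d. a < b \<and> b < c \<and> c < d \<and>
     (a, b) \<notin> r \<and> (a, c) \<in> r \<and> (a, d) \<notin> r \<and> (b, c) \<notin> r \<and> (b, d) \<in> r \<and> (c, d) \<notin> r)"

definition contains_M3 :: "nat rel \<Rightarrow> bool" where
  "contains_M3 r \<longleftrightarrow> (\<exists>a b c d. a < b \<and> b < c \<and> c < d \<and>
     (a, b) \<notin> r \<and> (a, c) \<notin> r \<and> (a, d) \<in> r \<and> (b, c) \<in> r \<and> (b, d) \<notin> r \<and> (c, d) \<notin> r)"

lemma naturally_labelledD: "naturally_labelled r \<Longrightarrow> (x, y) \<in> r \<Longrightarrow> x \<noteq> y \<Longrightarrow> x < y"
  by (auto simp: naturally_labelled_def)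

lemma naturally_labelled_antisym: "naturally_labelled r \<Longrightarrow> antisym r"
  by (metis antisymI naturally_labelledD order_less_asym)

lemma three_free_trans: "three_free r \<Longrightarrow> trans r"
  unfolding three_free_def strictly_below_def by (rule transI) blast

lemma three_free_iff_not_contains_M0:
  "naturally_labelled r \<Longrightarrow> three_free r \<longleftrightarrow> \<not> contains_M0 r"
  unfolding three_free_def contains_M0_def strictly_below_def
  by (auto dest: naturally_labelledD)

lemma incomparable_sym: "incomparable r x y \<longleftrightarrow> incomparable r y x"
  by (auto simp: incomparable_def)

lemma incomparable_chains_contain_M123:
  assumes chains: "(a, b) \<in> r" "(c, d) \<in> r" "a < b" "c < d" "a < c"
    and dist: "b \<noteq> c" "b \<noteq> d"
    and inc: "incomparable r a c" "incomparable r a d" "incomparable r b c" "incomparable r b d"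
  shows "contains_M1 r \<or> contains_M2 r \<or> contains_M3 r"
proof -
  consider "b < c" | "c < b" "b < d" | "d < b"
    using dist by linarith
  then show ?thesis
  proof cases
    case 1
    with chains inc have "contains_M1 r"
      unfolding contains_M1_def incomparable_def by blast
    then show ?thesis ..
  next
    case 2
    with chains inc have "contains_M2 r"
      unfolding contains_M2_def incomparable_def by blast
    then show ?thesis by blast
  next
    case 3
    with chains inc have "contains_M3 r"
      unfolding contains_M3_def incomparable_def by blast
    then show ?thesis by blast
  qed
qed

lemma two_plus_two_freeD:
  assumes "two_plus_two_free r" "distinct [i, j, k, l]"
    "strictly_below r i j" "strictly_below r k l"
    "incomparable r i k" "incomparable r i l" "incomparable r j k" "incomparable r j l"
  shows False
  using assms unfolding two_plus_two_free_def by blast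

lemma two_plus_two_free_iff_not_contains_M123:
  assumes nl: "naturally_labelled r"
  shows "two_plus_two_free r \<longleftrightarrow> \<not> contains_M1 r \<and> \<not> contains_M2 r \<and> \<not> contains_M3 r"
proof
  have inc: "incomparable r x y" "incomparable r y x" if "x < y" "(x, y) \<notin> r" for x y
    using that naturally_labelledD[OF nl, of y x] by (auto simp: incomparable_def)
  assume free: "two_plus_two_free r"
  have "\<not> contains_M1 r"
  proof
    assume "contains_M1 r"
    then obtain a b c d where "a < b" "b < c" "c < d"
      "(a, b) \<in> r" "(a, c) \<notin> r" "(a, d) \<notin> r" "(b, c) \<notin> r" "(b, d) \<notin> r" "(c, d) \<in> r"
      unfolding contains_M1_def by blast
    then show False
      using two_plus_two_freeD[OF free, of a b c d] inc[of a c] inc[of a d] inc[of b c] inc[of b d]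
      by (simp add: strictly_below_def)
  qed
  moreover have "\<not> contains_M2 r"
  proof
    assume "contains_M2 r"
    then obtain a b c d where "a < b" "b < c" "c < d"
      "(a, b) \<notin> r" "(a, c) \<in> r" "(a, d) \<notin> r" "(b, c) \<notin> r" "(b, d) \<in> r" "(c, d) \<notin> r"
      unfolding contains_M2_def by blast
    then show False
      using two_plus_two_freeD[OF free, of a c b d] inc[of a b] inc[of a d] inc[of b c] inc[of c d]
      by (simp add: strictly_below_def)
  qed
  moreover have "\<not> contains_M3 r"
  proof
    assume "contains_M3 r"
    then obtain a b c d where "a < b" "b < c" "c < d"
      "(a, b) \<notin> r" "(a, c) \<notin> r" "(a, d) \<in> r" "(b, c) \<in> r" "(b, d) \<notin> r" "(c, d) \<notin> r"
      unfolding contains_M3_def by blast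
    then show False
      using two_plus_two_freeD[OF free, of a d b c] inc[of a b] inc[of a c] inc[of b d] inc[of c d]
      by (simp add: strictly_below_def)
  qed
  ultimately show "\<not> contains_M1 r \<and> \<not> contains_M2 r \<and> \<not> contains_M3 r" by blast
next
  assume avoids: "\<not> contains_M1 r \<and> \<not> contains_M2 r \<and> \<not> contains_M3 r"
  show "two_plus_two_free r"
    unfolding two_plus_two_free_def
  proof
    assume "\<exists>i j k l. distinct [i, j, k, l] \<and> strictly_below r i j \<and> strictly_below r k l \<and>
      incomparable r i k \<and> incomparable r i l \<and> incomparable r j k \<and> incomparable r j l"
    then obtain i j k l where "distinct [i, j, k, l]" "(i, j) \<in> r" "(k, l) \<in> r"
      "incomparable r i k" "incomparable r i l" "incomparable r j k" "incomparable r j l"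
      unfolding strictly_below_def by blast
    moreover from this have "i < j" "k < l"
      using naturally_labelledD[OF nl] by auto
    ultimately show False
      using incomparable_chains_contain_M123[of i j r k l]
        incomparable_chains_contain_M123[of k l r i j] avoids
      by (cases "i < k") (auto simp: incomparable_sym)
  qed
qed

lemma index_incidence_matrix [simp]:
  "i < n \<Longrightarrow> j < n \<Longrightarrow> incidence_matrix n r $$ (i, j) = (if (Suc i, Suc j) \<in> r then 1 else 0)"
  by (simp add: incidence_matrix_def)

lemma ex_ascending3_Suc:
  assumes "\<And>x y z. P x y z \<Longrightarrow> 0 < x \<and> z \<le> n"
  shows "(\<exists>x y z. x < y \<and> y < z \<and> z < n \<and> P (Suc x) (Suc y) (Suc z)) \<longleftrightarrow>
    (\<exists>x y z. x < y \<and> y < z \<and> P x y z)"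
proof
  assume "\<exists>x y z. x < y \<and> y < z \<and> P x y z"
  then obtain x y z where "x < y" "y < z" "P x y z" by blast
  with assms[of x y z] show "\<exists>x y z. x < y \<and> y < z \<and> z < n \<and> P (Suc x) (Suc y) (Suc z)"
    by (intro exI[of _ "x - 1"] exI[of _ "y - 1"] exI[of _ "z - 1"]) auto
qed (use Suc_mono in blast)

lemma ex_ascending4_Suc:
  assumes "\<And>a b c d. P a b c d \<Longrightarrow> 0 < a \<and> d \<le> n"
  shows "(\<exists>a b c d. a < b \<and> b < c \<and> c < d \<and> d < n \<and> P (Suc a) (Suc b) (Suc c) (Suc d)) \<longleftrightarrow>
    (\<exists>a b c d. a < b \<and> b < c \<and> c < d \<and> P a b c d)"
proof
  assume "\<exists>a b c d. a < b \<and> b < c \<and> c < d \<and> P a b c d"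
  then obtain a b c d where "a < b" "b < c" "c < d" "P a b c d" by blast
  with assms[of a b c d]
  show "\<exists>a b c d. a < b \<and> b < c \<and> c < d \<and> d < n \<and> P (Suc a) (Suc b) (Suc c) (Suc d)"
    by (intro exI[of _ "a - 1"] exI[of _ "b - 1"] exI[of _ "c - 1"] exI[of _ "d - 1"]) auto
qed (use Suc_mono in blast)

lemma incidence_matrix_in_good_matrices_iff:
  assumes r: "r \<subseteq> {1..n} \<times> {1..n}"
  shows "incidence_matrix n r \<in> good_matrices n \<longleftrightarrow> refl_on {1..n} r \<and> naturally_labelled r \<and>
    \<not> contains_M0 r \<and> \<not> contains_M1 r \<and> \<not> contains_M2 r \<and> \<not> contains_M3 r"
proof -
  let ?M = "incidence_matrix n r"
  have in_range: "0 < x \<and> x \<le> n \<and> 0 < y \<and> y \<le> n" if "(x, y) \<in> r" for x y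
    using r that by auto
  have "?M \<in> carrier_mat n n"
    by (simp add: incidence_matrix_def)
  moreover have "\<forall>i<n. \<forall>j<n. ?M $$ (i, j) \<in> {0, 1}"
    by simp
  moreover have "upper_triangular ?M \<longleftrightarrow> naturally_labelled r"
  proof
    assume "upper_triangular ?M"
    then have no_descent: "(Suc i, Suc j) \<notin> r" if "j < i" "i < n" for i j
      using that upper_triangularD[of ?M j i] by (simp add: incidence_matrix_def split: if_splits)
    show "naturally_labelled r"
      unfolding naturally_labelled_def
    proof (intro allI impI)
      fix x y assume xy: "(x, y) \<in> r \<and> x \<noteq> y"
      then have "Suc (x - 1) = x" "Suc (y - 1) = y" "x - 1 < n"
        using in_range[of x y] by auto
      with xy no_descent[of "y - 1" "x - 1"] show "x < y"
        by (metis Suc_less_eq linorder_neqE_nat)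
    qed
  next
    assume nl: "naturally_labelled r"
    show "upper_triangular ?M"
      unfolding upper_triangular_def
    proof (intro allI impI)
      fix i j assume "i < dim_row ?M" "j < i"
      then show "?M $$ (i, j) = 0"
        using naturally_labelledD[OF nl, of "Suc i" "Suc j"] by (auto simp: incidence_matrix_def)
    qed
  qed
  moreover have "(\<forall>i<n. ?M $$ (i, i) = 1) \<longleftrightarrow> refl_on {1..n} r"
    unfolding refl_on_def image_Suc_lessThan[symmetric] by auto
  moreover have "(\<exists>i j k. i < j \<and> j < k \<and> k < n \<and> ?M $$ (i, j) = 1 \<and> ?M $$ (j, k) = 1) \<longleftrightarrow> contains_M0 r"
    unfolding contains_M0_def
    by (rule trans[OF _ ex_ascending3_Suc]) (use in_range in \<open>auto cong: conj_cong\<close>)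
  moreover have "(\<exists>a b c d. a < b \<and> b < c \<and> c < d \<and> d < n \<and>
          ?M $$ (a, b) = 1 \<and> ?M $$ (a, c) = 0 \<and> ?M $$ (a, d) = 0 \<and>
          ?M $$ (b, c) = 0 \<and> ?M $$ (b, d) = 0 \<and> ?M $$ (c, d) = 1) \<longleftrightarrow> contains_M1 r"
    unfolding contains_M1_def
    by (rule trans[OF _ ex_ascending4_Suc]) (use in_range in \<open>auto cong: conj_cong\<close>)
  moreover have "(\<exists>a b c d. a < b \<and> b < c \<and> c < d \<and> d < n \<and>
          ?M $$ (a, b) = 0 \<and> ?M $$ (a, c) = 1 \<and> ?M $$ (a, d) = 0 \<and>
          ?M $$ (b, c) = 0 \<and> ?M $$ (b, d) = 1 \<and> ?M $$ (c, d) = 0) \<longleftrightarrow> contains_M2 r"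
    unfolding contains_M2_def
    by (rule trans[OF _ ex_ascending4_Suc]) (use in_range in \<open>auto cong: conj_cong\<close>)
  moreover have "(\<exists>a b c d. a < b \<and> b < c \<and> c < d \<and> d < n \<and>
          ?M $$ (a, b) = 0 \<and> ?M $$ (a, c) = 0 \<and> ?M $$ (a, d) = 1 \<and>
          ?M $$ (b, c) = 1 \<and> ?M $$ (b, d) = 0 \<and> ?M $$ (c, d) = 0) \<longleftrightarrow> contains_M3 r"
    unfolding contains_M3_def
    by (rule trans[OF _ ex_ascending4_Suc]) (use in_range in \<open>auto cong: conj_cong\<close>)
  ultimately show ?thesis
    unfolding good_matrices_def mem_Collect_eq by (simp only: simp_thms) blast
qed

lemma mem_nl_32_free_posets_iff:
  "r \<in> nl_32_free_posets n \<longleftrightarrow> r \<subseteq> {1..n} \<times> {1..n} \<and> refl_on {1..n} r \<and> naturally_labelled r \<and>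
    \<not> contains_M0 r \<and> \<not> contains_M1 r \<and> \<not> contains_M2 r \<and> \<not> contains_M3 r"
  unfolding nl_32_free_posets_def partial_order_on_def preorder_on_def
  using three_free_trans naturally_labelled_antisym
    three_free_iff_not_contains_M0 two_plus_two_free_iff_not_contains_M123
  by blast

definition matrix_relation :: "nat \<Rightarrow> nat mat \<Rightarrow> nat rel" where
  "matrix_relation n M = {(Suc i, Suc j) | i j. i < n \<and> j < n \<and> M $$ (i, j) = 1}"

lemma matrix_relation_subset: "matrix_relation n M \<subseteq> {1..n} \<times> {1..n}"
  by (auto simp: matrix_relation_def)

lemma matrix_relation_incidence_matrix:
  assumes "r \<subseteq> {1..n} \<times> {1..n}"
  shows "matrix_relation n (incidence_matrix n r) = r"
proof -
  have "r \<subseteq> Suc ` {..<n} \<times> Suc ` {..<n}"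
    using assms by (simp only: image_Suc_lessThan)
  then show ?thesis
    by (auto simp: matrix_relation_def split: if_splits)
qed

lemma incidence_matrix_matrix_relation:
  assumes "M \<in> carrier_mat n n" "\<forall>i<n. \<forall>j<n. M $$ (i, j) \<in> {0, 1}"
  shows "incidence_matrix n (matrix_relation n M) = M"
  using assms by (intro eq_matI) (auto simp: incidence_matrix_def matrix_relation_def)

theorem proposition6:
  fixes n :: nat
  shows "bij_betw (incidence_matrix n) (nl_32_free_posets n) (good_matrices n)"
proof (rule bij_betw_byWitness[where f' = "matrix_relation n"])
  show "\<forall>r\<in>nl_32_free_posets n. matrix_relation n (incidence_matrix n r) = r"
    by (simp add: mem_nl_32_free_posets_iff matrix_relation_incidence_matrix)
  show "\<forall>M\<in>good_matrices n. incidence_matrix n (matrix_relation n M) = M"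
    by (simp add: good_matrices_def incidence_matrix_matrix_relation)
  show "incidence_matrix n ` nl_32_free_posets n \<subseteq> good_matrices n"
    by (auto simp: mem_nl_32_free_posets_iff incidence_matrix_in_good_matrices_iff)
  show "matrix_relation n ` good_matrices n \<subseteq> nl_32_free_posets n"
  proof
    fix r assume "r \<in> matrix_relation n ` good_matrices n"
    then obtain M where M: "M \<in> good_matrices n" and r: "r = matrix_relation n M" by blast
    have "incidence_matrix n r \<in> good_matrices n"
      using M r by (simp add: good_matrices_def incidence_matrix_matrix_relation)
    then show "r \<in> nl_32_free_posets n"
      using r matrix_relation_subset[of n M]
      by (simp add: mem_nl_32_free_posets_iff incidence_matrix_in_good_matrices_iff)
  qed
qed

end
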